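(* Let $n\in\mathbb{N}$, let $S\subset B_n$ be a nondegenerate simplex with vertices in $B_n$, and let $P:C(B_n)\to\Pi_1(\mathbb{R}^n)$ be the corresponding interpolation projector. If $P$ is minimal, i.e. $\|P\|_{B_n}=\theta_n(B_n)$, then $$\operatorname{vol}(S)\ \ge\ \frac{\varkappa_n}{\chi_n(\sqrt{n+1})}=\frac{\pi^{n/2}}{\Gamma\left(\frac n2+1\right)\chi_n(\sqrt{n+1})}.$$
   Context: $B_n=\{x\in\mathbb{R}^n:\|x\|\le1\}$ (Euclidean norm), $\varkappa_n=\operatorname{vol}(B_n)$. $C(B_n)$ is the space of continuous real functions on $B_n$ with the max norm; $\Pi_1(\mathbb{R}^n)$ is the set of polynomials in $n$ variables of degree at most $1$. For a nondegenerate simplex $S\subset B_n$ with vertices $x^{(1)},\dots,x^{(n+1)}$, the corresponding interpolation projector $P$ is defined by $Pf(x^{(j)})=f(x^{(j)})$, $j=1,\dots,n+1$, and $\|P\|_{B_n}$ is its operator norm on $C(B_n)$. $\theta_n(B_n)$ is the minimal value of $\|P\|_{B_n}$ over all nondegenerate simplices with vertices in $B_n$. $\chi_n(t)=\frac{1}{2^n n!}\frac{d^n}{dt^n}[(t^2-1)^n]$ is the Legendre polynomial of degree $n$. *)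

theory Defs
  imports "HOL-Analysis.Analysis" "HOL-Computational_Algebra.Polynomial"
begin

definition legendre :: "nat \<Rightarrow> real \<Rightarrow> real" where
  "legendre n t = poly ((pderiv ^^ n) ([:-1, 0, 1:] ^ n)) t / (2 ^ n * fact n)"

definition admissible_simplex :: "(nat \<Rightarrow> real ^ 'n) \<Rightarrow> bool" where
  "admissible_simplex x \<longleftrightarrow>
     inj_on x {..CARD('n)} \<and> \<not> affine_dependent (x ` {..CARD('n)}) \<and>
     (\<forall>j\<le>CARD('n). x j \<in> cball 0 1)"

definition interp_proj :: "(nat \<Rightarrow> real ^ 'n) \<Rightarrow> (real ^ 'n \<Rightarrow> real) \<Rightarrow> real ^ 'n \<Rightarrow> real" where
  "interp_proj x f = (THE p. (\<exists>a b. p = (\<lambda>y. a \<bullet> y + b)) \<and>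
                              (\<forall>j\<le>CARD('n). p (x j) = f (x j)))"

definition proj_norm :: "(nat \<Rightarrow> real ^ 'n) \<Rightarrow> real" where
  "proj_norm x = (SUP f \<in> {f. continuous_on (cball 0 1) f \<and> (\<forall>y\<in>cball 0 1. \<bar>f y\<bar> \<le> 1)}.
                    SUP y \<in> cball (0 :: real ^ 'n) 1. \<bar>interp_proj x f y\<bar>)"

definition theta :: "'n::finite itself \<Rightarrow> real" where
  "theta _ = (INF x \<in> {x :: nat \<Rightarrow> real ^ 'n. admissible_simplex x}. proj_norm x)"

end

(* The interpolation projector is P f = sum_j f(x_j) lambda_j, where lambda_0, ..., lambda_n are the
   barycentric coordinates of S, so ||P|| is the maximum over B_n of sum_j |lambda_j(y)| and B_n lies
   in E = {y. sum_j |lambda_j(y)| <= gamma} whenever ||P|| <= gamma.  The affine map taking the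
   standard simplex (volume 1/n!) onto S takes {mu. |1 - sum_i mu_i| + sum_i |mu_i| <= gamma} onto E;
   integrating out one coordinate at a time shows that this set has volume chi_n(gamma)/n! for
   gamma >= 1.  Hence vol(B_n) <= chi_n(gamma) vol(S).  By Cauchy-Schwarz the regular simplex inscribed
   in B_n has ||P|| <= sqrt(n+1), so a minimal projector may take gamma = sqrt(n+1). *)

theory Submission
  imports Defs
begin

lemma pderiv_sum: "pderiv (sum f A) = (\<Sum>x\<in>A. pderiv (f x))"
  by (induct A rule: infinite_finite_induct) (simp_all add: pderiv_add)

lemma higher_pderiv_mult:
  fixes p q :: "'a::{comm_semiring_1, semiring_no_zero_divisors} poly"
  shows "(pderiv ^^ m) (p * q) =
     (\<Sum>k\<le>m. smult (of_nat (m choose k)) ((pderiv ^^ k) p * (pderiv ^^ (m - k)) q))"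
proof (induction m)
  case 0
  then show ?case by simp
next
  case (Suc m)
  define D where "D = (\<lambda>k r. (pderiv ^^ k) (r::'a poly))"
  have "(pderiv ^^ Suc m) (p * q) =
      (\<Sum>k\<le>m. smult (of_nat (m choose k)) (D (Suc k) p * D (m - k) q))
      + (\<Sum>k\<le>m. smult (of_nat (m choose k)) (D k p * D (Suc (m - k)) q))"
    unfolding funpow.simps comp_def Suc.IH pderiv_sum pderiv_smult pderiv_mult
    by (simp add: D_def smult_add_right sum.distrib algebra_simps)
  also have "(\<Sum>k\<le>m. smult (of_nat (m choose k)) (D k p * D (Suc (m - k)) q))
      = (\<Sum>k\<le>Suc m. smult (of_nat (m choose k)) (D k p * D (Suc m - k) q))"
    by (simp add: Suc_diff_le binomial_eq_0)
  also have "\<dots> = D 0 p * D (Suc m) q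
      + (\<Sum>k\<le>m. smult (of_nat (m choose Suc k)) (D (Suc k) p * D (m - k) q))"
    by (subst sum.atMost_Suc_shift) simp
  finally show ?case
    by (subst sum.atMost_Suc_shift) (simp add: D_def smult_add_left sum.distrib algebra_simps)
qed

lemma higher_pderiv_linear_power:
  fixes a :: "'a::field_char_0"
  assumes "k \<le> n"
  shows "(pderiv ^^ k) ([:a, 1:] ^ n) = smult (fact n / fact (n - k)) ([:a, 1:] ^ (n - k))"
  using assms
proof (induction k)
  case 0
  then show ?case by simp
next
  case (Suc k)
  then obtain j where j: "n - k = Suc j" and j': "n - Suc k = j"
    by (metis Suc_diff_Suc Suc_le_eq diff_Suc_1 diff_Suc_eq_diff_pred)
  have "(pderiv ^^ Suc k) ([:a, 1:] ^ n) = pderiv (smult (fact n / fact (n - k)) ([:a, 1:] ^ Suc j))"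
    using Suc j by simp
  also have "\<dots> = smult (fact n / fact (n - k) * of_nat (Suc j)) ([:a, 1:] ^ j)"
    unfolding pderiv_smult pderiv_power_Suc by (simp add: pderiv_pCons)
  also have "fact n / fact (n - k) * of_nat (Suc j) = (fact n / fact j :: 'a)"
    using j by (simp add: fact_Suc field_simps del: of_nat_Suc)
  finally show ?case
    unfolding j' .
qed

definition legendre_form :: "nat \<Rightarrow> real \<Rightarrow> real \<Rightarrow> real" where
  "legendre_form n u v = (\<Sum>k\<le>n. real (n choose k) ^ 2 * u ^ (n - k) * v ^ k)"

lemma legendre_form_nonneg: "u \<ge> 0 \<Longrightarrow> v \<ge> 0 \<Longrightarrow> legendre_form n u v \<ge> 0"
  unfolding legendre_form_def by (intro sum_nonneg) auto

text \<open>Rodrigues' formula with \<open>(t\<^sup>2 - 1)\<^sup>n = (t - 1)\<^sup>n (t + 1)\<^sup>n\<close> and the Leibniz rule.\<close>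
lemma legendre_eq_legendre_form: "legendre n t = legendre_form n ((t - 1) / 2) ((t + 1) / 2)"
proof -
  have "[:-1, 0, 1:] ^ n = [:-1, 1:] ^ n * [:1, 1::real:] ^ n"
    by (simp flip: power_mult_distrib)
  then have "poly ((pderiv ^^ n) ([:-1, 0, 1:] ^ n)) t =
      (\<Sum>k\<le>n. real (n choose k) * (fact n / fact (n - k) * (t - 1) ^ (n - k))
                                 * (fact n / fact k * (t + 1) ^ k))"
    by (simp add: higher_pderiv_mult poly_sum higher_pderiv_linear_power mult.assoc)
       (intro sum.cong refl, simp add: algebra_simps)
  also have "\<dots> = 2 ^ n * fact n * legendre_form n ((t - 1) / 2) ((t + 1) / 2)"
    unfolding legendre_form_def sum_distrib_left
  proof (intro sum.cong refl)
    fix k assume "k \<in> {..n}"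
    then have "real (n choose k) = fact n / (fact k * fact (n - k))"
      and "(2::real) ^ n = 2 ^ (n - k) * 2 ^ k"
      by (simp_all add: binomial_fact flip: power_add)
    then show "real (n choose k) * (fact n / fact (n - k) * (t - 1) ^ (n - k))
                 * (fact n / fact k * (t + 1) ^ k)
        = 2 ^ n * fact n * (real (n choose k) ^ 2 * ((t - 1) / 2) ^ (n - k) * ((t + 1) / 2) ^ k)"
      by (simp add: power2_eq_square power_divide field_simps)
  qed
  finally show ?thesis
    unfolding legendre_def by simp
qed

lemma binomial_square_absorb_Suc:
  "real (Suc n) * (real (n choose k) ^ 2 * w / real (Suc k))
     = real (n choose k) * real (Suc n choose Suc k) * w"
proof -
  have absorb: "real (Suc n) * real (n choose k) = real (Suc n choose Suc k) * real (Suc k)"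
    by (metis Suc_times_binomial_eq of_nat_mult)
  have "real (Suc n) * (real (n choose k) ^ 2 * w / real (Suc k))
      = real (n choose k) * w * (real (Suc n) * real (n choose k)) / real (Suc k)"
    by (simp add: power2_eq_square mult_ac del: of_nat_Suc)
  also have "\<dots> = real (n choose k) * real (Suc n choose Suc k) * w"
    unfolding absorb by (simp del: of_nat_Suc binomial_Suc_Suc)
  finally show ?thesis .
qed

lemma binomial_square_absorb_comp:
  assumes "k \<le> n"
  shows "real (Suc n) * (real (n choose k) ^ 2 * w / real (Suc n - k))
     = real (n choose k) * real (Suc n choose k) * w"
proof -
  have "Suc n * (n choose k) = (Suc n choose k) * (Suc n - k)"
    using binomial_absorb_comp[of "Suc n" k] by (simp add: mult.commute)
  then have absorb: "real (Suc n) * real (n choose k) = real (Suc n choose k) * real (Suc n - k)"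
    by (metis of_nat_mult)
  have "real (Suc n) * (real (n choose k) ^ 2 * w / real (Suc n - k))
      = real (n choose k) * w * (real (Suc n) * real (n choose k)) / real (Suc n - k)"
    by (simp add: power2_eq_square mult_ac del: of_nat_Suc)
  also have "\<dots> = real (n choose k) * real (Suc n choose k) * w"
    unfolding absorb using assms by (simp del: of_nat_Suc)
  finally show ?thesis .
qed

lemma legendre_form_Suc:
  "real (Suc n) * ((\<Sum>k\<le>n. real (n choose k) ^ 2 * u ^ (n - k) * v ^ Suc k / real (Suc k))
                 + (\<Sum>k\<le>n. real (n choose k) ^ 2 * u ^ (Suc n - k) * v ^ k / real (Suc n - k)))
   = legendre_form (Suc n) u v"
proof -
  have pascal: "real (Suc n choose j) ^ 2 = real (Suc n choose j) * real (n choose j)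
      + (if j = 0 then 0 else real (Suc n choose j) * real (n choose (j - 1)))" for j
    by (cases j) (simp_all add: power2_eq_square algebra_simps)
  have "legendre_form (Suc n) u v =
        (\<Sum>j\<le>Suc n. real (Suc n choose j) * real (n choose j) * u ^ (Suc n - j) * v ^ j)
      + (\<Sum>j\<le>Suc n. (if j = 0 then 0 else real (Suc n choose j) * real (n choose (j - 1)))
                        * u ^ (Suc n - j) * v ^ j)"
    unfolding legendre_form_def pascal by (simp add: algebra_simps sum.distrib)
  also have "\<dots> = (\<Sum>k\<le>n. real (n choose k) * real (Suc n choose Suc k) * u ^ (n - k) * v ^ Suc k)
      + (\<Sum>k\<le>n. real (n choose k) * real (Suc n choose k) * u ^ (Suc n - k) * v ^ k)"
    by (subst (2) sum.atMost_Suc_shift) (simp add: mult.commute add.commute)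
  also have "\<dots> = real (Suc n) * ((\<Sum>k\<le>n. real (n choose k) ^ 2 * u ^ (n - k) * v ^ Suc k / real (Suc k))
                 + (\<Sum>k\<le>n. real (n choose k) ^ 2 * u ^ (Suc n - k) * v ^ k / real (Suc n - k)))"
    unfolding distrib_left sum_distrib_left
  proof (intro arg_cong2[where f = "(+)"] sum.cong refl)
    fix k assume "k \<in> {..n}"
    show "real (n choose k) * real (Suc n choose Suc k) * u ^ (n - k) * v ^ Suc k
        = real (Suc n) * (real (n choose k) ^ 2 * u ^ (n - k) * v ^ Suc k / real (Suc k))"
      by (simp only: binomial_square_absorb_Suc mult.assoc)
    from \<open>k \<in> {..n}\<close> show "real (n choose k) * real (Suc n choose k) * u ^ (Suc n - k) * v ^ k
        = real (Suc n) * (real (n choose k) ^ 2 * u ^ (Suc n - k) * v ^ k / real (Suc n - k))"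
      using binomial_square_absorb_comp[of k n] by (simp add: mult.assoc)
  qed
  finally show ?thesis ..
qed

lemma borel_measurable_legendre_form [measurable]:
  "f \<in> borel_measurable M \<Longrightarrow> g \<in> borel_measurable M \<Longrightarrow>
    (\<lambda>x. legendre_form n (f x) (g x)) \<in> borel_measurable M"
  unfolding legendre_form_def by (intro borel_measurable_sum borel_measurable_times borel_measurable_power) auto

lemma nn_integral_legendre_form_right:
  assumes "0 \<le> u" "0 \<le> v"
  shows "(\<integral>\<^sup>+y. ennreal (legendre_form n u (v - y) / fact n) * indicator {0..v} y \<partial>lborel)
    = ennreal ((\<Sum>k\<le>n. real (n choose k) ^ 2 * u ^ (n - k) * v ^ Suc k / real (Suc k)) / fact n)"
proof -
  let ?F = "\<lambda>y. - (\<Sum>k\<le>n. real (n choose k) ^ 2 * u ^ (n - k) * (v - y) ^ Suc k / real (Suc k)) / fact n"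
  have "(\<integral>\<^sup>+y. ennreal (legendre_form n u (v - y) / fact n) * indicator {0..v} y \<partial>lborel) = ?F v - ?F 0"
  proof (rule nn_integral_FTC_Icc)
    show "(\<lambda>y. legendre_form n u (v - y) / fact n) \<in> borel_measurable borel"
      by measurable
    show "(?F has_real_derivative legendre_form n u (v - y) / fact n) (at y)" for y
      unfolding legendre_form_def
      by (rule derivative_eq_intros refl | simp)+ (simp add: sum_negf algebra_simps del: of_nat_Suc)
    show "0 \<le> legendre_form n u (v - y) / fact n" if "y \<in> {0..v}" for y
      using that assms by (simp add: legendre_form_nonneg)
  qed (use assms in simp)
  then show ?thesis
    by simp
qed

lemma nn_integral_legendre_form_left:
  assumes "0 \<le> u" "0 \<le> v"
  shows "(\<integral>\<^sup>+y. ennreal (legendre_form n (u + y) v / fact n) * indicator {-u..0} y \<partial>lborel)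
    = ennreal ((\<Sum>k\<le>n. real (n choose k) ^ 2 * u ^ (Suc n - k) * v ^ k / real (Suc n - k)) / fact n)"
proof -
  let ?F = "\<lambda>y. (\<Sum>k\<le>n. real (n choose k) ^ 2 * (u + y) ^ (Suc n - k) * v ^ k / real (Suc n - k)) / fact n"
  have "(\<integral>\<^sup>+y. ennreal (legendre_form n (u + y) v / fact n) * indicator {-u..0} y \<partial>lborel) = ?F 0 - ?F (-u)"
  proof (rule nn_integral_FTC_Icc)
    show "(\<lambda>y. legendre_form n (u + y) v / fact n) \<in> borel_measurable borel"
      by measurable
    show "(?F has_real_derivative legendre_form n (u + y) v / fact n) (at y)" for y
      unfolding legendre_form_def
      by (rule derivative_eq_intros refl | simp)+ (simp add: Suc_diff_le algebra_simps del: of_nat_Suc)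
    show "0 \<le> legendre_form n (u + y) v / fact n" if "y \<in> {-u..0}" for y
      using that assms by (simp add: legendre_form_nonneg)
  qed (use assms in simp)
  then show ?thesis
    by (simp add: zero_power)
qed

definition barycentric_ball :: "'a set \<Rightarrow> real \<Rightarrow> real \<Rightarrow> ('a \<Rightarrow> real) set" where
  "barycentric_ball A c t = {f. \<bar>c - sum f A\<bar> + (\<Sum>i\<in>A. \<bar>f i\<bar>) \<le> t}"

definition barycentric_ball_volume :: "nat \<Rightarrow> real \<Rightarrow> real \<Rightarrow> real" where
  "barycentric_ball_volume n c t =
     (if \<bar>c\<bar> \<le> t then legendre_form n ((t - c) / 2) ((t + c) / 2) / fact n else 0)"

lemma barycentric_ball_volume_nonneg: "barycentric_ball_volume n c t \<ge> 0"
  unfolding barycentric_ball_volume_def by (auto intro!: divide_nonneg_pos legendre_form_nonneg)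

lemma barycentric_ball_volume_slice:
  assumes "\<bar>c\<bar> \<le> t" "y \<noteq> 0"
  defines "u \<equiv> (t - c) / 2" and "v \<equiv> (t + c) / 2"
  shows "ennreal (barycentric_ball_volume n (c - y) (t - \<bar>y\<bar>)) =
      ennreal (legendre_form n (u + y) v / fact n) * indicator {-u..0} y
    + ennreal (legendre_form n u (v - y) / fact n) * indicator {0..v} y"
proof (cases "y > 0")
  case True
  have "((t - \<bar>y\<bar>) - (c - y)) / 2 = u" "((t - \<bar>y\<bar>) + (c - y)) / 2 = v - y"
    "\<bar>c - y\<bar> \<le> t - \<bar>y\<bar> \<longleftrightarrow> y \<le> v"
    using True assms(1) by (auto simp: u_def v_def abs_le_iff)
  then show ?thesis
    using True unfolding barycentric_ball_volume_def by (simp only:) (simp add: indicator_def)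
next
  case False
  then have "y < 0"
    using assms(2) by simp
  then have "((t - \<bar>y\<bar>) - (c - y)) / 2 = u + y" "((t - \<bar>y\<bar>) + (c - y)) / 2 = v"
    "\<bar>c - y\<bar> \<le> t - \<bar>y\<bar> \<longleftrightarrow> -u \<le> y"
    using assms(1) by (auto simp: u_def v_def abs_le_iff field_simps)
  then show ?thesis
    using \<open>y < 0\<close> unfolding barycentric_ball_volume_def by (simp only:) (simp add: indicator_def)
qed

lemma nn_integral_barycentric_ball_volume:
  "(\<integral>\<^sup>+y. ennreal (barycentric_ball_volume n (c - y) (t - \<bar>y\<bar>)) \<partial>lborel)
     = ennreal (barycentric_ball_volume (Suc n) c t)"
proof (cases "\<bar>c\<bar> \<le> t")
  case False
  then have "barycentric_ball_volume n (c - y) (t - \<bar>y\<bar>) = 0" for y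
    unfolding barycentric_ball_volume_def by auto
  with False show ?thesis
    by (simp add: barycentric_ball_volume_def)
next
  case True
  define u where "u = (t - c) / 2"
  define v where "v = (t + c) / 2"
  have "0 \<le> u" "0 \<le> v"
    using True by (auto simp: u_def v_def)
  let ?A = "\<Sum>k\<le>n. real (n choose k) ^ 2 * u ^ (Suc n - k) * v ^ k / real (Suc n - k)"
  let ?B = "\<Sum>k\<le>n. real (n choose k) ^ 2 * u ^ (n - k) * v ^ Suc k / real (Suc k)"
  have "(\<integral>\<^sup>+y. ennreal (barycentric_ball_volume n (c - y) (t - \<bar>y\<bar>)) \<partial>lborel) =
      (\<integral>\<^sup>+y. ennreal (legendre_form n (u + y) v / fact n) * indicator {-u..0} y
             + ennreal (legendre_form n u (v - y) / fact n) * indicator {0..v} y \<partial>lborel)"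
    using barycentric_ball_volume_slice[OF True] AE_lborel_singleton[of 0]
    by (intro nn_integral_cong_AE) (auto simp: u_def v_def elim!: eventually_mono)
  also have "\<dots> = (\<integral>\<^sup>+y. ennreal (legendre_form n (u + y) v / fact n) * indicator {-u..0} y \<partial>lborel)
      + (\<integral>\<^sup>+y. ennreal (legendre_form n u (v - y) / fact n) * indicator {0..v} y \<partial>lborel)"
    by (rule nn_integral_add) measurable
  also have "\<dots> = ennreal (?A / fact n) + ennreal (?B / fact n)"
    using \<open>0 \<le> u\<close> \<open>0 \<le> v\<close>
    by (simp only: nn_integral_legendre_form_left nn_integral_legendre_form_right)
  also have "\<dots> = ennreal (?A / fact n + ?B / fact n)"
    using \<open>0 \<le> u\<close> \<open>0 \<le> v\<close> by (intro ennreal_plus[symmetric] divide_nonneg_pos sum_nonneg) auto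
  also have "?A / fact n + ?B / fact n = barycentric_ball_volume (Suc n) c t"
    using True legendre_form_Suc[of n u v]
    by (simp add: barycentric_ball_volume_def u_def v_def field_simps del: of_nat_Suc)
  finally show ?thesis .
qed

lemma barycentric_ball_upd:
  assumes "finite A" "b \<notin> A"
  shows "f(b := y) \<in> barycentric_ball (insert b A) c t \<longleftrightarrow> f \<in> barycentric_ball A (c - y) (t - \<bar>y\<bar>)"
proof -
  have "sum (f(b := y)) A = sum f A" "(\<Sum>i\<in>A. \<bar>(f(b := y)) i\<bar>) = (\<Sum>i\<in>A. \<bar>f i\<bar>)"
    using assms by (auto intro!: sum.cong)
  with assms show ?thesis
    unfolding barycentric_ball_def by (auto simp: algebra_simps)
qed

lemma sets_barycentric_ball [measurable]:
  assumes "finite A"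
  shows "barycentric_ball A c t \<inter> space (\<Pi>\<^sub>M i\<in>A. lborel) \<in> sets (\<Pi>\<^sub>M i\<in>A. lborel)"
proof -
  have "barycentric_ball A c t \<inter> space (\<Pi>\<^sub>M i\<in>A. lborel) =
      (\<lambda>f. \<bar>c - sum f A\<bar> + (\<Sum>i\<in>A. \<bar>f i\<bar>)) -` {..t} \<inter> space (\<Pi>\<^sub>M i\<in>A. lborel)"
    by (auto simp: barycentric_ball_def)
  also have "\<dots> \<in> sets (\<Pi>\<^sub>M i\<in>A. lborel)"
    using assms by measurable
  finally show ?thesis .
qed

lemma emeasure_barycentric_ball:
  assumes "finite A"
  shows "emeasure (\<Pi>\<^sub>M i\<in>A. lborel) (barycentric_ball A c t \<inter> space (\<Pi>\<^sub>M i\<in>A. lborel))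
           = ennreal (barycentric_ball_volume (card A) c t)"
  using assms
proof (induction arbitrary: c t rule: finite_induct)
  case empty
  show ?case
    by (simp add: PiM_empty barycentric_ball_def barycentric_ball_volume_def legendre_form_def
        emeasure_count_space indicator_def)
next
  case (insert b A c t)
  let ?M = "\<lambda>A. \<Pi>\<^sub>M i\<in>A. (lborel :: real measure)"
  interpret product_sigma_finite "\<lambda>_. lborel :: real measure"
    by standard
  have "emeasure (?M (insert b A)) (barycentric_ball (insert b A) c t \<inter> space (?M (insert b A)))
      = (\<integral>\<^sup>+f. indicator (barycentric_ball (insert b A) c t \<inter> space (?M (insert b A))) f \<partial>?M (insert b A))"
    using insert.hyps by (subst nn_integral_indicator) auto
  also have "\<dots> = (\<integral>\<^sup>+y. \<integral>\<^sup>+f. indicator (barycentric_ball (insert b A) c t \<inter> space (?M (insert b A)))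
                       (f(b := y)) \<partial>?M A \<partial>lborel)"
    using insert.hyps by (intro product_nn_integral_insert_rev) auto
  also have "\<dots> = (\<integral>\<^sup>+y. \<integral>\<^sup>+f. indicator (barycentric_ball A (c - y) (t - \<bar>y\<bar>) \<inter> space (?M A)) f
                    \<partial>?M A \<partial>lborel)"
    using insert.hyps barycentric_ball_upd[of A b]
    by (intro nn_integral_cong) (auto simp: indicator_def space_PiM PiE_def extensional_def)
  also have "\<dots> = (\<integral>\<^sup>+y. ennreal (barycentric_ball_volume (card A) (c - y) (t - \<bar>y\<bar>)) \<partial>lborel)"
    using insert.hyps insert.IH by (subst nn_integral_indicator) auto
  also have "\<dots> = ennreal (barycentric_ball_volume (card (insert b A)) c t)"
    using insert.hyps by (simp add: nn_integral_barycentric_ball_volume)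
  finally show ?case .
qed

lemma emeasure_lborel_barycentric_ball:
  "emeasure lborel {x::'a::euclidean_space. \<bar>c - (\<Sum>b\<in>Basis. x \<bullet> b)\<bar> + (\<Sum>b\<in>Basis. \<bar>x \<bullet> b\<bar>) \<le> t}
     = ennreal (barycentric_ball_volume DIM('a) c t)"
proof -
  let ?M = "\<Pi>\<^sub>M b\<in>(Basis::'a set). lborel"
  let ?K = "{x::'a. \<bar>c - (\<Sum>b\<in>Basis. x \<bullet> b)\<bar> + (\<Sum>b\<in>Basis. \<bar>x \<bullet> b\<bar>) \<le> t}"
  have coords: "(\<Sum>b'\<in>Basis. f b' *\<^sub>R b') \<bullet> b = f b" if "b \<in> Basis" for f :: "'a \<Rightarrow> real" and b
    using that by (simp add: inner_sum_left inner_Basis if_distrib cong: if_cong)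
  have "(\<lambda>f. \<Sum>b\<in>Basis. f b *\<^sub>R b) -` ?K \<inter> space ?M = barycentric_ball Basis c t \<inter> space ?M"
    by (auto simp: barycentric_ball_def coords space_PiM cong: sum.cong)
  moreover have "?K \<in> sets borel"
    by measurable
  ultimately have "emeasure lborel ?K = emeasure ?M (barycentric_ball Basis c t \<inter> space ?M)"
    by (subst lborel_eq) (simp add: emeasure_distr)
  then show ?thesis
    by (simp add: emeasure_barycentric_ball)
qed

text \<open>The change-of-variables theorems of \<^theory>\<open>HOL-Analysis.Change_Of_Vars\<close> need a
  well-ordered index type; a copy of a finite type ordered by \<^const>\<open>to_nat\<close> provides one.\<close>
typedef 'a ord_copy = "UNIV :: 'a set"
  morphisms of_ord_copy to_ord_copy by auto

instance ord_copy :: (finite) finite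
proof
  have "finite (to_ord_copy ` (UNIV :: 'a set))"
    by simp
  then show "finite (UNIV :: 'a ord_copy set)"
    by (simp flip: type_definition.univ[OF type_definition_ord_copy])
qed

instantiation ord_copy :: (finite) linorder
begin

definition less_eq_ord_copy :: "'a ord_copy \<Rightarrow> 'a ord_copy \<Rightarrow> bool" where
  "i \<le> j \<longleftrightarrow> to_nat (of_ord_copy i) \<le> to_nat (of_ord_copy j)"

definition less_ord_copy :: "'a ord_copy \<Rightarrow> 'a ord_copy \<Rightarrow> bool" where
  "i < j \<longleftrightarrow> to_nat (of_ord_copy i) < to_nat (of_ord_copy j)"

instance
proof
  fix i j k :: "'a ord_copy"
  show "i < j \<longleftrightarrow> i \<le> j \<and> \<not> j \<le> i" "i \<le> i" "i \<le> j \<or> j \<le> i"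
    by (auto simp: less_eq_ord_copy_def less_ord_copy_def)
  show "i \<le> j \<Longrightarrow> j \<le> k \<Longrightarrow> i \<le> k"
    by (simp add: less_eq_ord_copy_def)
  show "i \<le> j \<Longrightarrow> j \<le> i \<Longrightarrow> i = j"
    unfolding less_eq_ord_copy_def by (metis antisym of_ord_copy_inject to_nat_split)
qed

end

instance ord_copy :: (finite) wellorder
proof
  fix P :: "'a ord_copy \<Rightarrow> bool" and i
  assume step: "\<And>i. (\<And>j. j < i \<Longrightarrow> P j) \<Longrightarrow> P i"
  show "P i"
  proof (induction i rule: measure_induct_rule[of "\<lambda>i. to_nat (of_ord_copy i)"])
    case (less i)
    then show ?case
      by (rule step) (simp add: less_ord_copy_def)
  qed
qed

definition copy_vec :: "real ^ 'n \<Rightarrow> real ^ 'n ord_copy" where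
  "copy_vec x = (\<chi> i. x $ of_ord_copy i)"

definition uncopy_vec :: "real ^ 'n ord_copy \<Rightarrow> real ^ 'n" where
  "uncopy_vec y = (\<chi> j. y $ to_ord_copy j)"

lemma uncopy_copy_vec [simp]: "uncopy_vec (copy_vec x) = x"
  by (simp add: copy_vec_def uncopy_vec_def vec_eq_iff to_ord_copy_inverse)

lemma copy_uncopy_vec [simp]: "copy_vec (uncopy_vec y) = y"
  by (simp add: copy_vec_def uncopy_vec_def vec_eq_iff of_ord_copy_inverse)

lemma linear_copy_vec: "linear copy_vec"
  by (intro linearI) (simp_all add: copy_vec_def vec_eq_iff)

lemma linear_uncopy_vec: "linear uncopy_vec"
  by (intro linearI) (simp_all add: uncopy_vec_def vec_eq_iff)

lemma uncopy_vec_vimage_box: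
  fixes l u :: "real ^ 'n"
  shows "uncopy_vec -` box l u = box (copy_vec l) (copy_vec u)"
proof -
  have "y \<in> uncopy_vec -` box l u \<longleftrightarrow> y \<in> box (copy_vec l) (copy_vec u)" for y
  proof -
    have "y \<in> uncopy_vec -` box l u \<longleftrightarrow> (\<forall>j. l $ j < y $ to_ord_copy j \<and> y $ to_ord_copy j < u $ j)"
      by (simp add: mem_box_cart uncopy_vec_def)
    also have "\<dots> \<longleftrightarrow> (\<forall>i. l $ of_ord_copy i < y $ i \<and> y $ i < u $ of_ord_copy i)"
      by (metis of_ord_copy_inverse to_ord_copy_inverse UNIV_I)
    also have "\<dots> \<longleftrightarrow> y \<in> box (copy_vec l) (copy_vec u)"
      by (simp add: mem_box_cart copy_vec_def)
    finally show ?thesis .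
  qed
  then show ?thesis
    by blast
qed

lemma prod_Basis_vec: "(\<Prod>b\<in>(Basis :: (real ^ 'n) set). f b) = (\<Prod>i\<in>UNIV. f (axis i 1))"
proof -
  have Basis: "(Basis :: (real ^ 'n) set) = range (\<lambda>i. axis i 1)"
    by (auto simp: Basis_vec_def)
  have "inj (\<lambda>i::'n. axis i (1::real))"
    by (auto intro!: injI simp: axis_eq_axis)
  then show ?thesis
    unfolding Basis by (simp add: prod.reindex)
qed

lemma borel_measurable_uncopy_vec [measurable]: "uncopy_vec \<in> borel_measurable borel"
  using linear_uncopy_vec
  by (intro borel_measurable_continuous_onI linear_continuous_on) (simp add: linear_conv_bounded_linear[symmetric])

lemma distr_lborel_uncopy_vec: "distr lborel borel uncopy_vec = (lborel :: (real ^ 'n) measure)"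
proof (rule lborel_eqI[symmetric])
  fix l u :: "real ^ 'n"
  assume le_Basis: "\<And>b. b \<in> Basis \<Longrightarrow> l \<bullet> b \<le> u \<bullet> b"
  have le: "l $ j \<le> u $ j" for j
    using le_Basis[of "axis j 1"] by (simp add: cart_eq_inner_axis[symmetric])
  have "bij of_ord_copy"
    by (rule bij_betwI[where g = to_ord_copy]) (auto simp: of_ord_copy_inverse to_ord_copy_inverse)
  have "emeasure (distr lborel borel uncopy_vec) (box l u) = emeasure lborel (box (copy_vec l) (copy_vec u))"
    by (simp add: emeasure_distr uncopy_vec_vimage_box)
  also have "\<dots> = (\<Prod>b\<in>Basis. (copy_vec u - copy_vec l) \<bullet> b)"
    by (intro emeasure_lborel_box) (auto simp: Basis_vec_def copy_vec_def le cart_eq_inner_axis[symmetric])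
  also have "\<dots> = (\<Prod>i\<in>UNIV. (u - l) $ of_ord_copy i)"
    unfolding prod_Basis_vec by (simp add: cart_eq_inner_axis[symmetric] copy_vec_def)
  also have "\<dots> = (\<Prod>j\<in>UNIV. (u - l) $ j)"
    using prod.reindex_bij_betw[OF \<open>bij of_ord_copy\<close>, of "\<lambda>j. (u - l) $ j"] by simp
  also have "\<dots> = (\<Prod>b\<in>Basis. (u - l) \<bullet> b)"
    unfolding prod_Basis_vec by (simp add: cart_eq_inner_axis[symmetric])
  finally show "emeasure (distr lborel borel uncopy_vec) (box l u) = (\<Prod>b\<in>Basis. (u - l) \<bullet> b)" .
qed simp

lemma measure_copy_vec_image:
  fixes S :: "(real ^ 'n) set"
  assumes "compact S"
  shows "measure lebesgue (copy_vec ` S) = measure lebesgue S"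
proof -
  have "compact (copy_vec ` S)"
    using assms linear_copy_vec
    by (intro compact_continuous_image linear_continuous_on) (simp add: linear_conv_bounded_linear[symmetric])
  moreover have "copy_vec ` S = uncopy_vec -` S"
    by (auto simp: image_iff) (metis copy_uncopy_vec)
  ultimately have "measure lebesgue (copy_vec ` S) = measure (distr lborel borel uncopy_vec) S"
    using assms by (simp add: measure_completion measure_distr borel_compact)
  also have "\<dots> = measure lebesgue S"
    using assms by (simp add: distr_lborel_uncopy_vec measure_completion borel_compact)
  finally show ?thesis .
qed

lemma linear_image_measure_scale:
  fixes f :: "real ^ 'n \<Rightarrow> real ^ 'n"
  assumes "linear f"
  obtains c where "\<And>S. compact S \<Longrightarrow> measure lebesgue (f ` S) = c * measure lebesgue S"
proof -
  define g where "g = copy_vec \<circ> f \<circ> uncopy_vec"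
  have "linear g"
    unfolding g_def using assms linear_copy_vec linear_uncopy_vec by (intro linear_compose)
  have "measure lebesgue (f ` S) = \<bar>det (matrix g)\<bar> * measure lebesgue S" if "compact S" for S
  proof -
    have "compact (f ` S)" "compact (copy_vec ` S)"
      using that assms linear_copy_vec
      by (auto intro!: compact_continuous_image linear_continuous_on simp: linear_conv_bounded_linear[symmetric])
    moreover have "copy_vec ` f ` S = g ` copy_vec ` S"
      by (auto simp: g_def image_image)
    ultimately show ?thesis
      using measure_linear_image[OF \<open>linear g\<close> lmeasurable_compact[of "copy_vec ` S"]]
      by (simp flip: measure_copy_vec_image add: that)
  qed
  then show ?thesis
    using that by blast
qed

lemma linear_plus_const_eq_0_on_affine_hull:
  fixes h :: "'a::real_vector \<Rightarrow> 'b::real_vector"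
  assumes "linear h" and zero: "\<And>v. v \<in> S \<Longrightarrow> h v + k = 0" and "y \<in> affine hull S"
  shows "h y + k = 0"
proof -
  obtain T u where T: "finite T" "T \<subseteq> S" "sum u T = 1" and y: "y = (\<Sum>v\<in>T. u v *\<^sub>R v)"
    using \<open>y \<in> affine hull S\<close> unfolding affine_hull_explicit by blast
  have "h y + k = (\<Sum>v\<in>T. u v *\<^sub>R h v) + (\<Sum>v\<in>T. u v) *\<^sub>R k"
    using \<open>linear h\<close> T(3) by (simp add: y linear_sum linear_scale)
  also have "\<dots> = (\<Sum>v\<in>T. u v *\<^sub>R (h v + k))"
    by (simp add: scaleR_add_right scaleR_sum_left sum.distrib)
  also have "\<dots> = 0"
    using T(2) zero by (intro sum.neutral) auto
  finally show ?thesis .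
qed

lemma affine_hull_admissible_simplex:
  fixes x :: "nat \<Rightarrow> real ^ 'n"
  assumes "admissible_simplex x"
  shows "affine hull (x ` {..CARD('n)}) = UNIV"
proof -
  have "card (x ` {..CARD('n)}) = Suc CARD('n)" and "\<not> affine_dependent (x ` {..CARD('n)})"
    using assms by (simp_all add: admissible_simplex_def card_image)
  then have "aff_dim (x ` {..CARD('n)}) = DIM(real ^ 'n)"
    using aff_dim_affine_independent[of "x ` {..CARD('n)}"] by simp
  then show ?thesis
    using aff_dim_eq_full[of "x ` {..CARD('n)}"] by simp
qed

text \<open>For a nondegenerate simplex the affine functions \<open>y \<mapsto> a j \<bullet> y + b j\<close> with this
  Kronecker property are its barycentric coordinates.\<close>
definition barycentric_coordinates :: "(nat \<Rightarrow> real ^ 'n) \<Rightarrow> (nat \<Rightarrow> real ^ 'n) \<Rightarrow> (nat \<Rightarrow> real) \<Rightarrow> bool" where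
  "barycentric_coordinates x a b \<longleftrightarrow>
     (\<forall>i\<le>CARD('n). \<forall>j\<le>CARD('n). a j \<bullet> x i + b j = (if i = j then 1 else 0))"

lemma barycentric_coordinatesD:
  "barycentric_coordinates x a b \<Longrightarrow> i \<le> CARD('n) \<Longrightarrow> j \<le> CARD('n) \<Longrightarrow>
    a j \<bullet> x i + b j = (if i = j then 1 else 0)"
  for x :: "nat \<Rightarrow> real ^ 'n"
  unfolding barycentric_coordinates_def by blast

lemma sum_barycentric_vertex:
  fixes x :: "nat \<Rightarrow> real ^ 'n"
  assumes "barycentric_coordinates x a b" "i \<le> CARD('n)"
  shows "(\<Sum>j\<le>CARD('n). (a j \<bullet> x i + b j) * g j) = g i"
proof -
  have "(\<Sum>j\<le>CARD('n). (a j \<bullet> x i + b j) * g j) = (\<Sum>j\<le>CARD('n). if i = j then g j else 0)"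
    using assms by (intro sum.cong) (auto simp: barycentric_coordinatesD)
  then show ?thesis
    using assms(2) by simp
qed

lemma sum_barycentric_coordinate:
  fixes x :: "nat \<Rightarrow> real ^ 'n"
  assumes "barycentric_coordinates x a b" "j \<le> CARD('n)"
  shows "(\<Sum>i\<le>CARD('n). (a j \<bullet> x i + b j) * g i) = g j"
proof -
  have "(\<Sum>i\<le>CARD('n). (a j \<bullet> x i + b j) * g i) = (\<Sum>i\<le>CARD('n). if i = j then g i else 0)"
    using assms by (intro sum.cong) (auto simp: barycentric_coordinatesD)
  then show ?thesis
    using assms(2) by simp
qed

text \<open>Both sides are affine in \<open>y\<close> and agree at the vertices, which affinely span the space.\<close>
lemma affine_eq_barycentric_combination:
  fixes x :: "nat \<Rightarrow> real ^ 'n"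
  assumes "admissible_simplex x" "barycentric_coordinates x a b"
  shows "c \<bullet> y + d = (\<Sum>j\<le>CARD('n). (a j \<bullet> y + b j) * (c \<bullet> x j + d))"
proof -
  define w where "w = c - (\<Sum>j\<le>CARD('n). (c \<bullet> x j + d) *\<^sub>R a j)"
  define k where "k = d - (\<Sum>j\<le>CARD('n). b j * (c \<bullet> x j + d))"
  have "w \<bullet> z = c \<bullet> z - (\<Sum>j\<le>CARD('n). (a j \<bullet> z) * (c \<bullet> x j + d))" for z
    by (simp add: w_def inner_diff_left inner_sum_left mult.commute)
  then have diff: "w \<bullet> z + k = c \<bullet> z + d - (\<Sum>j\<le>CARD('n). (a j \<bullet> z + b j) * (c \<bullet> x j + d))" for z
    by (simp add: k_def distrib_right sum.distrib)
  have "w \<bullet> x i + k = 0" if "i \<le> CARD('n)" for i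
    unfolding diff sum_barycentric_vertex[OF assms(2) that] by simp
  then have "w \<bullet> y + k = 0"
    using affine_hull_admissible_simplex[OF assms(1)]
      linear_plus_const_eq_0_on_affine_hull[OF bounded_linear.linear[OF bounded_linear_inner_right],
        of "x ` {..CARD('n)}" w k y]
    by blast
  then show ?thesis
    by (simp add: diff)
qed

lemma sum_barycentric_eq_1:
  fixes x :: "nat \<Rightarrow> real ^ 'n"
  assumes "admissible_simplex x" "barycentric_coordinates x a b"
  shows "(\<Sum>j\<le>CARD('n). a j \<bullet> y + b j) = 1"
  using affine_eq_barycentric_combination[OF assms, of 0 y 1] by simp

lemma barycentric_combination_eq:
  fixes x :: "nat \<Rightarrow> real ^ 'n"
  assumes "admissible_simplex x" "barycentric_coordinates x a b"
  shows "(\<Sum>j\<le>CARD('n). (a j \<bullet> y + b j) *\<^sub>R x j) = y"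
proof (rule euclidean_eqI)
  fix c :: "real ^ 'n"
  show "(\<Sum>j\<le>CARD('n). (a j \<bullet> y + b j) *\<^sub>R x j) \<bullet> c = y \<bullet> c"
    using affine_eq_barycentric_combination[OF assms, of c y 0]
    by (simp add: inner_sum_left mult.commute inner_commute[of c])
qed

lemma interp_proj_barycentric:
  fixes x :: "nat \<Rightarrow> real ^ 'n"
  assumes "admissible_simplex x" and bary: "barycentric_coordinates x a b"
  shows "interp_proj x f = (\<lambda>y. \<Sum>j\<le>CARD('n). f (x j) * (a j \<bullet> y + b j))"
  unfolding interp_proj_def
proof (rule the_equality)
  let ?p = "\<lambda>y. \<Sum>j\<le>CARD('n). f (x j) * (a j \<bullet> y + b j)"
  have "?p = (\<lambda>y. (\<Sum>j\<le>CARD('n). f (x j) *\<^sub>R a j) \<bullet> y + (\<Sum>j\<le>CARD('n). f (x j) * b j))"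
    by (simp add: inner_sum_left distrib_left sum.distrib fun_eq_iff mult.assoc)
  moreover have "?p (x i) = f (x i)" if "i \<le> CARD('n)" for i
    using sum_barycentric_vertex[OF bary that, of "\<lambda>j. f (x j)"] by (simp add: mult.commute)
  ultimately show "(\<exists>c d. ?p = (\<lambda>y. c \<bullet> y + d)) \<and> (\<forall>j\<le>CARD('n). ?p (x j) = f (x j))"
    by blast
next
  fix p assume p: "(\<exists>c d. p = (\<lambda>y. c \<bullet> y + d)) \<and> (\<forall>j\<le>CARD('n). p (x j) = f (x j))"
  then obtain c d where cd: "p = (\<lambda>y. c \<bullet> y + d)"
    by blast
  show "p = (\<lambda>y. \<Sum>j\<le>CARD('n). f (x j) * (a j \<bullet> y + b j))"
  proof
    fix y
    have "p y = (\<Sum>j\<le>CARD('n). (a j \<bullet> y + b j) * p (x j))"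
      unfolding cd by (rule affine_eq_barycentric_combination[OF assms])
    also have "\<dots> = (\<Sum>j\<le>CARD('n). f (x j) * (a j \<bullet> y + b j))"
      using p by (intro sum.cong) auto
    finally show "p y = (\<Sum>j\<le>CARD('n). f (x j) * (a j \<bullet> y + b j))" .
  qed
qed

lemma admissible_simplex_if_barycentric:
  fixes x :: "nat \<Rightarrow> real ^ 'n"
  assumes bary: "barycentric_coordinates x a b" and ball: "\<forall>j\<le>CARD('n). x j \<in> cball 0 1"
  shows "admissible_simplex x"
proof -
  have inj: "inj_on x {..CARD('n)}"
  proof (rule inj_onI)
    fix i j assume "i \<in> {..CARD('n)}" "j \<in> {..CARD('n)}" "x i = x j"
    then have "a i \<bullet> x i + b i = 1" "a i \<bullet> x i + b i = (if j = i then 1 else 0)"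
      using barycentric_coordinatesD[OF bary, of i i] barycentric_coordinatesD[OF bary, of j i]
      by simp_all
    then show "i = j"
      by (simp split: if_splits)
  qed
  have "\<not> affine_dependent (x ` {..CARD('n)})"
  proof
    assume "affine_dependent (x ` {..CARD('n)})"
    then obtain U where U0: "sum U (x ` {..CARD('n)}) = 0"
      and "\<exists>v\<in>x ` {..CARD('n)}. U v \<noteq> 0" and Us: "(\<Sum>v\<in>x ` {..CARD('n)}. U v *\<^sub>R v) = 0"
      using affine_dependent_explicit_finite[of "x ` {..CARD('n)}"] by blast
    then obtain k where k: "k \<le> CARD('n)" and Uk: "U (x k) \<noteq> 0"
      by blast
    have "0 = a k \<bullet> (\<Sum>v\<in>x ` {..CARD('n)}. U v *\<^sub>R v) + sum U (x ` {..CARD('n)}) * b k"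
      using U0 Us by simp
    also have "\<dots> = a k \<bullet> (\<Sum>i\<le>CARD('n). U (x i) *\<^sub>R x i) + (\<Sum>i\<le>CARD('n). U (x i)) * b k"
      using inj by (simp add: sum.reindex)
    also have "\<dots> = (\<Sum>i\<le>CARD('n). (a k \<bullet> x i + b k) * U (x i))"
      by (simp add: inner_sum_right sum_distrib_left sum_distrib_right sum.distrib algebra_simps)
    also have "\<dots> = U (x k)"
      by (rule sum_barycentric_coordinate[OF bary k])
    finally show False
      using Uk by simp
  qed
  with inj ball show ?thesis
    unfolding admissible_simplex_def by auto
qed

lemma proj_norm_le:
  fixes x :: "nat \<Rightarrow> real ^ 'n"
  assumes "\<And>f y. continuous_on (cball 0 1) f \<Longrightarrow> \<forall>z\<in>cball 0 1. \<bar>f z\<bar> \<le> 1 \<Longrightarrow> y \<in> cball 0 1 \<Longrightarrow>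
             \<bar>interp_proj x f y\<bar> \<le> C"
  shows "proj_norm x \<le> C"
  unfolding proj_norm_def
proof (rule cSUP_least)
  show "{f. continuous_on (cball (0::real ^ 'n) 1) f \<and> (\<forall>y\<in>cball 0 1. \<bar>f y\<bar> \<le> (1::real))} \<noteq> {}"
    by (auto intro!: exI[of _ "\<lambda>_. 0"])
qed (use assms in \<open>auto intro!: cSUP_least\<close>)

lemma abs_interp_proj_le_proj_norm:
  fixes x :: "nat \<Rightarrow> real ^ 'n"
  assumes bound: "\<And>g z. continuous_on (cball 0 1) g \<Longrightarrow> \<forall>y\<in>cball 0 1. \<bar>g y\<bar> \<le> 1 \<Longrightarrow> z \<in> cball 0 1 \<Longrightarrow>
             \<bar>interp_proj x g z\<bar> \<le> B"
    and f: "continuous_on (cball 0 1) f" "\<forall>y\<in>cball 0 1. \<bar>f y\<bar> \<le> 1" and y: "y \<in> cball 0 1"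
  shows "\<bar>interp_proj x f y\<bar> \<le> proj_norm x"
proof -
  have "\<bar>interp_proj x f y\<bar> \<le> (SUP z\<in>cball 0 1. \<bar>interp_proj x f z\<bar>)"
    using f y bound by (intro cSUP_upper bdd_aboveI2) auto
  also have "\<dots> \<le> proj_norm x"
    unfolding proj_norm_def using f bound
    by (intro cSUP_upper bdd_aboveI2 cSUP_least) auto
  finally show ?thesis .
qed

definition lebesgue_function :: "(nat \<Rightarrow> real ^ 'n) \<Rightarrow> (nat \<Rightarrow> real) \<Rightarrow> real ^ 'n \<Rightarrow> real" where
  "lebesgue_function a b y = (\<Sum>j\<le>CARD('n). \<bar>a j \<bullet> y + b j\<bar>)"

lemma lebesgue_function_nonneg: "lebesgue_function a b y \<ge> 0"
  unfolding lebesgue_function_def by (simp add: sum_nonneg)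

lemma lebesgue_function_le_norms:
  fixes y :: "real ^ 'n"
  assumes "y \<in> cball 0 1"
  shows "lebesgue_function a b y \<le> (\<Sum>j\<le>CARD('n). norm (a j) + \<bar>b j\<bar>)"
  unfolding lebesgue_function_def
proof (intro sum_mono)
  fix j
  have "\<bar>a j \<bullet> y\<bar> \<le> norm (a j) * norm y"
    by (rule Cauchy_Schwarz_ineq2)
  also have "\<dots> \<le> norm (a j)"
    using assms by (simp add: mult_left_le)
  finally show "\<bar>a j \<bullet> y + b j\<bar> \<le> norm (a j) + \<bar>b j\<bar>"
    by linarith
qed

lemma abs_interp_proj_le_lebesgue_function:
  fixes x :: "nat \<Rightarrow> real ^ 'n"
  assumes adm: "admissible_simplex x" and bary: "barycentric_coordinates x a b"
    and f: "\<forall>y\<in>cball 0 1. \<bar>f y\<bar> \<le> 1"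
  shows "\<bar>interp_proj x f y\<bar> \<le> lebesgue_function a b y"
proof -
  have "\<bar>interp_proj x f y\<bar> \<le> (\<Sum>j\<le>CARD('n). \<bar>f (x j)\<bar> * \<bar>a j \<bullet> y + b j\<bar>)"
    unfolding interp_proj_barycentric[OF adm bary] abs_mult[symmetric] by (rule sum_abs)
  also have "\<dots> \<le> lebesgue_function a b y"
    unfolding lebesgue_function_def
    using adm f by (intro sum_mono mult_left_le_one_le) (auto simp: admissible_simplex_def)
  finally show ?thesis .
qed

lemma proj_norm_le_lebesgue_function:
  fixes x :: "nat \<Rightarrow> real ^ 'n"
  assumes "admissible_simplex x" "barycentric_coordinates x a b"
    and "\<forall>y\<in>cball 0 1. lebesgue_function a b y \<le> C"
  shows "proj_norm x \<le> C"
  using assms by (intro proj_norm_le) (meson abs_interp_proj_le_lebesgue_function order_trans)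

text \<open>The extremal function takes the values \<open>sgn \<lambda>\<^sub>j(y)\<close> at the vertices; it is clipped to
  \<open>[-1, 1]\<close> since it is only needed at the vertices.\<close>
lemma lebesgue_function_le_proj_norm:
  fixes x :: "nat \<Rightarrow> real ^ 'n"
  assumes adm: "admissible_simplex x" and bary: "barycentric_coordinates x a b"
    and y: "y \<in> cball 0 1"
  shows "lebesgue_function a b y \<le> proj_norm x"
proof -
  define s where "s j = sgn (a j \<bullet> y + b j)" for j
  define f where "f z = max (-1) (min 1 (\<Sum>j\<le>CARD('n). s j * (a j \<bullet> z + b j)))" for z :: "real ^ 'n"
  have "f (x i) = s i" if "i \<le> CARD('n)" for i
    using sum_barycentric_coordinate[OF bary that, of s]
    by (simp add: f_def s_def sum_barycentric_vertex[OF bary that] mult.commute sgn_if)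
  then have "interp_proj x f y = lebesgue_function a b y"
    unfolding interp_proj_barycentric[OF adm bary] lebesgue_function_def s_def
    by (intro sum.cong) (auto simp: sgn_if)
  moreover have "\<bar>interp_proj x f y\<bar> \<le> proj_norm x"
  proof (rule abs_interp_proj_le_proj_norm[OF _ _ _ y])
    show "continuous_on (cball 0 1) f"
      unfolding f_def by (intro continuous_intros)
    show "\<bar>interp_proj x g z\<bar> \<le> (\<Sum>j\<le>CARD('n). norm (a j) + \<bar>b j\<bar>)"
      if "\<forall>y\<in>cball 0 1. \<bar>g y\<bar> \<le> 1" "z \<in> cball 0 1" for g z
      using abs_interp_proj_le_lebesgue_function[OF adm bary that(1)] lebesgue_function_le_norms[OF that(2)]
      by (rule order_trans)
  qed (auto simp: f_def)
  ultimately show ?thesis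
    using lebesgue_function_nonneg[of a b y] by simp
qed

lemma sum_atMost_conv_Basis:
  fixes e :: "real ^ 'n \<Rightarrow> nat"
  assumes "bij_betw e Basis {1..CARD('n)}"
  shows "(\<Sum>j\<le>CARD('n). g j) = g 0 + (\<Sum>c\<in>Basis. g (e c))"
proof -
  have "(\<Sum>c\<in>Basis. g (e c)) = sum g {1..CARD('n)}"
    by (rule sum.reindex_bij_betw[OF assms])
  moreover have "{..CARD('n)} = insert 0 {1..CARD('n)}"
    by auto
  ultimately show ?thesis
    by simp
qed

definition simplex_edge_map :: "(nat \<Rightarrow> real ^ 'n) \<Rightarrow> (real ^ 'n \<Rightarrow> nat) \<Rightarrow> real ^ 'n \<Rightarrow> real ^ 'n" where
  "simplex_edge_map x e \<mu> = (\<Sum>c\<in>Basis. (\<mu> \<bullet> c) *\<^sub>R (x (e c) - x 0))"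

lemma simplex_edge_map_Basis:
  assumes "c \<in> Basis"
  shows "simplex_edge_map x e c = x (e c) - x 0"
proof -
  have "simplex_edge_map x e c = (\<Sum>c'\<in>Basis. if c' = c then x (e c') - x 0 else 0)"
    unfolding simplex_edge_map_def using assms by (intro sum.cong) (auto simp: inner_Basis)
  then show ?thesis
    using assms by simp
qed

lemma linear_simplex_edge_map: "linear (simplex_edge_map x e)"
  by (intro linearI)
     (simp_all add: simplex_edge_map_def inner_add_left scaleR_add_left sum.distrib scaleR_sum_right)

lemma inj_simplex_edge_map:
  fixes x :: "nat \<Rightarrow> real ^ 'n" and e :: "real ^ 'n \<Rightarrow> nat"
  assumes adm: "admissible_simplex x" and e: "bij_betw e Basis {1..CARD('n)}"
  shows "inj (simplex_edge_map x e)"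
  unfolding linear_injective_0[OF linear_simplex_edge_map]
proof (intro allI impI)
  fix \<mu> :: "real ^ 'n"
  assume M0: "simplex_edge_map x e \<mu> = 0"
  define u where "u j = (if j = 0 then - (\<Sum>c\<in>Basis. \<mu> \<bullet> c) else \<mu> \<bullet> inv_into Basis e j)" for j
  have u_e: "u (e c) = \<mu> \<bullet> c" if "c \<in> Basis" for c
    using that e by (force simp: u_def bij_betw_def)
  have inj: "inj_on x {..CARD('n)}" and indep: "\<not> affine_dependent (x ` {..CARD('n)})"
    using adm by (auto simp: admissible_simplex_def)
  define U where "U = u \<circ> inv_into {..CARD('n)} x"
  have U: "U (x j) = u j" if "j \<le> CARD('n)" for j
    using inj that by (simp add: U_def)
  have "sum U (x ` {..CARD('n)}) = (\<Sum>j\<le>CARD('n). u j)"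
    using inj U by (simp add: sum.reindex)
  also have "\<dots> = 0"
    unfolding sum_atMost_conv_Basis[OF e] using u_e by (simp add: u_def)
  finally have "sum U (x ` {..CARD('n)}) = 0" .
  moreover have "(\<Sum>v\<in>x ` {..CARD('n)}. U v *\<^sub>R v) = (\<Sum>j\<le>CARD('n). u j *\<^sub>R x j)"
    using inj U by (simp add: sum.reindex)
  moreover have "\<dots> = 0"
    unfolding sum_atMost_conv_Basis[OF e] using u_e M0
    by (simp add: u_def simplex_edge_map_def scaleR_diff_right sum_subtractf scaleR_sum_left)
  ultimately have "\<forall>v\<in>x ` {..CARD('n)}. U v = 0"
    using indep affine_dependent_explicit_finite[of "x ` {..CARD('n)}"] by auto
  then have "\<mu> \<bullet> c = 0" if "c \<in> Basis" for c
    using that e U[of "e c"] u_e[OF that] by (force simp: bij_betw_def)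
  then show "\<mu> = 0"
    by (metis euclidean_eqI inner_zero_left)
qed

lemma barycentric_coordinatesI:
  fixes x :: "nat \<Rightarrow> real ^ 'n" and e :: "real ^ 'n \<Rightarrow> nat" and \<mu> :: "real ^ 'n \<Rightarrow> real ^ 'n"
  assumes e: "bij_betw e Basis {1..CARD('n)}"
    and coord_0: "\<And>y. a 0 \<bullet> y + b 0 = 1 - (\<Sum>c\<in>Basis. \<mu> y \<bullet> c)"
    and coord_e: "\<And>c y. c \<in> Basis \<Longrightarrow> a (e c) \<bullet> y + b (e c) = \<mu> y \<bullet> c"
    and \<mu>_0: "\<mu> (x 0) = 0" and \<mu>_e: "\<And>c. c \<in> Basis \<Longrightarrow> \<mu> (x (e c)) = c"
  shows "barycentric_coordinates x a b"
proof -
  have index: "j = 0 \<or> (\<exists>c\<in>Basis. j = e c)" if "j \<le> CARD('n)" for j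
    using that e by (force simp: bij_betw_def)
  have e_neq_0: "e c \<noteq> 0" if "c \<in> Basis" for c
    using that e by (force simp: bij_betw_def)
  have e_eq_iff: "e c = e c' \<longleftrightarrow> c = c'" if "c \<in> Basis" "c' \<in> Basis" for c c'
    using that e by (auto simp: bij_betw_def dest: inj_onD)
  have "a j \<bullet> x i + b j = (if i = j then 1 else 0)" if "i \<le> CARD('n)" "j \<le> CARD('n)" for i j
    using index[OF that(1)] index[OF that(2)]
    by (auto simp: coord_0 coord_e \<mu>_0 \<mu>_e e_neq_0 e_eq_iff inner_Basis sum.delta)
  then show ?thesis
    unfolding barycentric_coordinates_def by blast
qed

lemma barycentric_coordinates_exist:
  fixes x :: "nat \<Rightarrow> real ^ 'n"
  assumes "admissible_simplex x"
  obtains a b where "barycentric_coordinates x a b"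
proof -
  obtain e :: "real ^ 'n \<Rightarrow> nat" where e: "bij_betw e Basis {1..CARD('n)}"
    using finite_same_card_bij[of "Basis :: (real ^ 'n) set" "{1..CARD('n)}"] by auto
  obtain L where L: "linear L" and L_inv: "\<And>\<mu>. L (simplex_edge_map x e \<mu>) = \<mu>"
    using linear_injective_left_inverse[OF linear_simplex_edge_map inj_simplex_edge_map[OF assms e]]
    by (auto simp: fun_eq_iff)
  define a where "a j = (if j = 0 then - (\<Sum>c\<in>Basis. adjoint L c) else adjoint L (inv_into Basis e j))" for j
  define b where "b j = (if j = 0 then 1 + (\<Sum>c\<in>Basis. adjoint L c \<bullet> x 0)
                                 else - (adjoint L (inv_into Basis e j) \<bullet> x 0))" for j
  have adj: "L (y - x 0) \<bullet> c = adjoint L c \<bullet> y - adjoint L c \<bullet> x 0" for y c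
    using adjoint_works[OF L, of "y - x 0" c] by (simp add: inner_commute inner_diff_right)
  show ?thesis
  proof (rule that, rule barycentric_coordinatesI[OF e, where \<mu> = "\<lambda>y. L (y - x 0)"])
    show "a 0 \<bullet> y + b 0 = 1 - (\<Sum>c\<in>Basis. L (y - x 0) \<bullet> c)" for y
      by (simp add: a_def b_def adj inner_sum_left sum_subtractf)
    show "a (e c) \<bullet> y + b (e c) = L (y - x 0) \<bullet> c" if "c \<in> Basis" for c y
    proof -
      have "e c \<noteq> 0" "inv_into Basis e (e c) = c"
        using that e by (force simp: bij_betw_def)+
      then show ?thesis
        by (simp add: a_def b_def adj)
    qed
    show "L (x 0 - x 0) = 0"
      using L by (simp add: linear_0)
    show "L (x (e c) - x 0) = c" if "c \<in> Basis" for c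
      using L_inv[of c] simplex_edge_map_Basis[OF that] by simp
  qed
qed

lemma lebesgue_function_simplex_param:
  fixes x :: "nat \<Rightarrow> real ^ 'n" and e :: "real ^ 'n \<Rightarrow> nat"
  assumes bary: "barycentric_coordinates x a b" and e: "bij_betw e Basis {1..CARD('n)}"
  shows "lebesgue_function a b (x 0 + simplex_edge_map x e \<mu>)
           = \<bar>1 - (\<Sum>c\<in>Basis. \<mu> \<bullet> c)\<bar> + (\<Sum>c\<in>Basis. \<bar>\<mu> \<bullet> c\<bar>)"
proof -
  have e_index: "(e c = 0) = False" "e c \<le> CARD('n)" if "c \<in> Basis" for c
    using that e by (force simp: bij_betw_def)+
  have e_eq_iff: "e c' = e c \<longleftrightarrow> c' = c" if "c \<in> Basis" "c' \<in> Basis" for c c'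
    using that e by (auto simp: bij_betw_def dest: inj_onD)
  let ?y = "x 0 + simplex_edge_map x e \<mu>"
  have affine: "a j \<bullet> ?y + b j
      = (a j \<bullet> x 0 + b j) + (\<Sum>c\<in>Basis. (\<mu> \<bullet> c) * ((a j \<bullet> x (e c) + b j) - (a j \<bullet> x 0 + b j)))" for j
    by (simp add: simplex_edge_map_def inner_add_right inner_sum_right inner_diff_right)
  have "(\<Sum>c\<in>Basis. (\<mu> \<bullet> c) * ((a 0 \<bullet> x (e c) + b 0) - (a 0 \<bullet> x 0 + b 0)))
      = (\<Sum>c\<in>Basis. - (\<mu> \<bullet> c))"
    by (intro sum.cong) (auto simp: e_index barycentric_coordinatesD[OF bary])
  then have "a 0 \<bullet> ?y + b 0 = 1 - (\<Sum>c\<in>Basis. \<mu> \<bullet> c)"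
    unfolding affine by (simp add: barycentric_coordinatesD[OF bary] sum_negf)
  moreover have "a (e c) \<bullet> ?y + b (e c) = \<mu> \<bullet> c" if "c \<in> Basis" for c
  proof -
    have "(\<Sum>c'\<in>Basis. (\<mu> \<bullet> c') * ((a (e c) \<bullet> x (e c') + b (e c)) - (a (e c) \<bullet> x 0 + b (e c))))
        = (\<Sum>c'\<in>Basis. if c' = c then \<mu> \<bullet> c' else 0)"
      using that by (intro sum.cong) (auto simp: e_index e_eq_iff barycentric_coordinatesD[OF bary])
    then show ?thesis
      unfolding affine using that by (simp add: e_index barycentric_coordinatesD[OF bary])
  qed
  ultimately show ?thesis
    unfolding lebesgue_function_def sum_atMost_conv_Basis[OF e] by simp
qed

lemma convex_hull_simplex_param:
  fixes x :: "nat \<Rightarrow> real ^ 'n" and e :: "real ^ 'n \<Rightarrow> nat"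
  assumes e: "bij_betw e Basis {1..CARD('n)}"
  shows "convex hull (x ` {..CARD('n)}) = (+) (x 0) ` simplex_edge_map x e ` (convex hull (insert 0 Basis))"
proof -
  have "{..CARD('n)} = insert 0 (e ` Basis)"
    using e by (auto simp: bij_betw_def)
  then have "x ` {..CARD('n)} = insert (x 0) ((\<lambda>c. x (e c)) ` Basis)"
    by (simp add: image_image)
  also have "\<dots> = (+) (x 0) ` simplex_edge_map x e ` insert 0 Basis"
    using linear_0[OF linear_simplex_edge_map]
    by (auto simp: simplex_edge_map_Basis image_image intro!: image_cong)
  finally have vertices: "x ` {..CARD('n)} = (+) (x 0) ` simplex_edge_map x e ` insert 0 Basis" .
  show ?thesis
    unfolding vertices convex_hull_translation convex_hull_linear_image[OF linear_simplex_edge_map] ..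
qed

lemma compact_barycentric_ball:
  "compact {\<mu>::'a::euclidean_space. \<bar>c - (\<Sum>b\<in>Basis. \<mu> \<bullet> b)\<bar> + (\<Sum>b\<in>Basis. \<bar>\<mu> \<bullet> b\<bar>) \<le> t}"
  (is "compact ?T")
proof -
  have "?T \<subseteq> cball 0 t"
  proof
    fix \<mu> assume "\<mu> \<in> ?T"
    then have "(\<Sum>b\<in>Basis. \<bar>\<mu> \<bullet> b\<bar>) \<le> t"
      using abs_ge_zero[of "c - (\<Sum>b\<in>Basis. \<mu> \<bullet> b)"] by simp
    with norm_le_l1[of \<mu>] show "\<mu> \<in> cball 0 t"
      by simp
  qed
  moreover have "closed ?T"
    by (intro closed_Collect_le continuous_intros)
  ultimately show ?thesis
    using bounded_subset[OF bounded_cball] by (auto simp: compact_eq_bounded_closed)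
qed

lemma measure_barycentric_ball:
  assumes "1 \<le> \<gamma>"
  shows "measure lebesgue {\<mu>::'a::euclidean_space. \<bar>1 - (\<Sum>b\<in>Basis. \<mu> \<bullet> b)\<bar> + (\<Sum>b\<in>Basis. \<bar>\<mu> \<bullet> b\<bar>) \<le> \<gamma>}
    = legendre DIM('a) \<gamma> / fact DIM('a)"
proof -
  let ?T = "{\<mu>::'a. \<bar>1 - (\<Sum>b\<in>Basis. \<mu> \<bullet> b)\<bar> + (\<Sum>b\<in>Basis. \<bar>\<mu> \<bullet> b\<bar>) \<le> \<gamma>}"
  have "measure lebesgue ?T = measure lborel ?T"
    using compact_barycentric_ball by (intro measure_completion) (simp add: borel_compact)
  also have "\<dots> = barycentric_ball_volume DIM('a) 1 \<gamma>"
    by (simp add: measure_def emeasure_lborel_barycentric_ball barycentric_ball_volume_nonneg)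
  also have "\<dots> = legendre DIM('a) \<gamma> / fact DIM('a)"
    using assms by (simp add: barycentric_ball_volume_def legendre_eq_legendre_form)
  finally show ?thesis .
qed

lemma unit_ball_subset_simplex_param:
  fixes x :: "nat \<Rightarrow> real ^ 'n" and e :: "real ^ 'n \<Rightarrow> nat"
  assumes adm: "admissible_simplex x" and e: "bij_betw e Basis {1..CARD('n)}"
    and "proj_norm x \<le> \<gamma>"
  shows "cball 0 1 \<subseteq> (+) (x 0) ` simplex_edge_map x e `
           {\<mu>. \<bar>1 - (\<Sum>b\<in>Basis. \<mu> \<bullet> b)\<bar> + (\<Sum>b\<in>Basis. \<bar>\<mu> \<bullet> b\<bar>) \<le> \<gamma>}"
proof
  fix y :: "real ^ 'n" assume "y \<in> cball 0 1"
  obtain a b where bary: "barycentric_coordinates x a b"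
    using barycentric_coordinates_exist[OF adm] .
  have "surj (simplex_edge_map x e)"
    by (rule linear_inj_imp_surj[OF linear_simplex_edge_map inj_simplex_edge_map[OF adm e]])
  then obtain \<mu> where "y - x 0 = simplex_edge_map x e \<mu>"
    by (meson surjD)
  then have \<mu>: "y = x 0 + simplex_edge_map x e \<mu>"
    by (simp add: algebra_simps)
  have "lebesgue_function a b y \<le> \<gamma>"
    using lebesgue_function_le_proj_norm[OF adm bary \<open>y \<in> cball 0 1\<close>] \<open>proj_norm x \<le> \<gamma>\<close> by simp
  then have "\<mu> \<in> {\<mu>. \<bar>1 - (\<Sum>b\<in>Basis. \<mu> \<bullet> b)\<bar> + (\<Sum>b\<in>Basis. \<bar>\<mu> \<bullet> b\<bar>) \<le> \<gamma>}"
    unfolding \<mu> lebesgue_function_simplex_param[OF bary e] by simp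
  then show "y \<in> (+) (x 0) ` simplex_edge_map x e `
           {\<mu>. \<bar>1 - (\<Sum>b\<in>Basis. \<mu> \<bullet> b)\<bar> + (\<Sum>b\<in>Basis. \<bar>\<mu> \<bullet> b\<bar>) \<le> \<gamma>}"
    using \<mu> by (simp add: image_image rev_image_eqI)
qed

lemma admissible_simplex_volume_bound:
  fixes x :: "nat \<Rightarrow> real ^ 'n"
  assumes adm: "admissible_simplex x" and "proj_norm x \<le> \<gamma>" and "1 \<le> \<gamma>"
  shows "measure lebesgue (cball (0::real ^ 'n) 1)
           \<le> legendre CARD('n) \<gamma> * measure lebesgue (convex hull (x ` {..CARD('n)}))"
proof -
  obtain e :: "real ^ 'n \<Rightarrow> nat" where e: "bij_betw e Basis {1..CARD('n)}"
    using finite_same_card_bij[of "Basis :: (real ^ 'n) set" "{1..CARD('n)}"] by auto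
  define M where "M = simplex_edge_map x e"
  have "linear M"
    unfolding M_def by (rule linear_simplex_edge_map)
  then obtain c where c: "\<And>S. compact S \<Longrightarrow> measure lebesgue (M ` S) = c * measure lebesgue S"
    using linear_image_measure_scale by blast
  define T where "T = {\<mu>::real ^ 'n. \<bar>1 - (\<Sum>b\<in>Basis. \<mu> \<bullet> b)\<bar> + (\<Sum>b\<in>Basis. \<bar>\<mu> \<bullet> b\<bar>) \<le> \<gamma>}"
  define D where "D = convex hull (insert 0 (Basis :: (real ^ 'n) set))"
  have "compact T" "compact D"
    unfolding T_def D_def by (auto intro: compact_barycentric_ball finite_imp_compact_convex_hull)
  have "cball 0 1 \<subseteq> (+) (x 0) ` M ` T"
    using unit_ball_subset_simplex_param[OF adm e \<open>proj_norm x \<le> \<gamma>\<close>] by (simp add: M_def T_def)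
  then have "measure lebesgue (cball (0::real ^ 'n) 1) \<le> measure lebesgue ((+) (x 0) ` M ` T)"
    using \<open>compact T\<close> \<open>linear M\<close>
    by (intro measure_mono_fmeasurable lmeasurable_compact compact_translation compact_continuous_image
        linear_continuous_on) (auto simp: linear_conv_bounded_linear[symmetric])
  also have "\<dots> = c * (legendre CARD('n) \<gamma> / fact CARD('n))"
    using c[OF \<open>compact T\<close>] measure_barycentric_ball[OF \<open>1 \<le> \<gamma>\<close>, where 'a = "real ^ 'n"]
    by (simp add: measure_translation T_def)
  also have "\<dots> = legendre CARD('n) \<gamma> * measure lebesgue ((+) (x 0) ` M ` D)"
    using c[OF \<open>compact D\<close>] measure_completion[of D] content_std_simplex[where 'a = "real ^ 'n"]
      compact_imp_closed[OF \<open>compact D\<close>]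
    by (simp add: measure_translation D_def borel_closed)
  also have "(+) (x 0) ` M ` D = convex hull (x ` {..CARD('n)})"
    unfolding convex_hull_simplex_param[OF e] D_def M_def ..
  finally show ?thesis .
qed

lemma regular_simplex_exists:
  obtains z :: "nat \<Rightarrow> real ^ 'n"
  where "\<And>i j. i \<le> CARD('n) \<Longrightarrow> j \<le> CARD('n) \<Longrightarrow> z i \<bullet> z j = (if i = j then 1 else - 1 / CARD('n))"
proof -
  define n where "n = real CARD('n)"
  define w where "w = sqrt n"
  define q where "q = sqrt (n + 1)"
  have n: "n > 0" and w: "w > 0" "w * w = n" and q: "q * q = n + 1"
    by (simp_all add: n_def w_def q_def)
  define \<alpha> where "\<alpha> = q / w"
  define \<beta> where "\<beta> = (1 - q) / (n * w)"
  define g where "g = - 1 / w"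
  obtain r where r: "bij_betw r {1..CARD('n)} (UNIV :: 'n set)"
    using finite_same_card_bij[of "{1..CARD('n)}" "UNIV :: 'n set"] by auto
  define z :: "nat \<Rightarrow> real ^ 'n"
    where "z j = (if j = 0 then g *\<^sub>R 1 else \<alpha> *\<^sub>R axis (r j) 1 + \<beta> *\<^sub>R 1)" for j
  have ones: "1 \<bullet> (1 :: real ^ 'n) = n" "axis i 1 \<bullet> (1 :: real ^ 'n) = 1"
    "1 \<bullet> (axis i 1 :: real ^ 'n) = 1" for i
    by (simp add: n_def inner_vec_def) (simp_all add: inner_axis inner_commute[of "axis i 1"])
  have "\<alpha> * \<alpha> + (\<alpha> * \<beta> + \<beta> * \<alpha> + n * (\<beta> * \<beta>)) = 1"
    "\<alpha> * \<beta> + \<beta> * \<alpha> + n * (\<beta> * \<beta>) = - 1 / n"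
    "g * (\<alpha> + n * \<beta>) = - 1 / n" "n * (g * g) = 1"
    using n w q by (simp_all add: \<alpha>_def \<beta>_def g_def field_simps)
  moreover have "r i = r j \<longleftrightarrow> i = j" if "i \<in> {1..CARD('n)}" "j \<in> {1..CARD('n)}" for i j
    using r that by (auto simp: bij_betw_def dest: inj_onD)
  ultimately have "z i \<bullet> z j = (if i = j then 1 else - 1 / n)" if "i \<le> CARD('n)" "j \<le> CARD('n)" for i j
    using that n
    by (auto simp: z_def inner_add_left inner_add_right ones inner_axis_axis algebra_simps field_simps)
  then show ?thesis
    by (intro that[of z]) (simp add: n_def)
qed

lemma regular_simplex_barycentric:
  fixes z :: "nat \<Rightarrow> real ^ 'n"
  assumes gram: "\<And>i j. i \<le> CARD('n) \<Longrightarrow> j \<le> CARD('n) \<Longrightarrow> z i \<bullet> z j = (if i = j then 1 else - 1 / CARD('n))"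
  shows "barycentric_coordinates z (\<lambda>j. (real CARD('n) / (real CARD('n) + 1)) *\<^sub>R z j) (\<lambda>j. 1 / (real CARD('n) + 1))"
  unfolding barycentric_coordinates_def
proof (intro allI impI)
  fix i j assume "i \<le> CARD('n)" "j \<le> CARD('n)"
  have "(real CARD('n) / (real CARD('n) + 1)) *\<^sub>R z j \<bullet> z i + 1 / (real CARD('n) + 1)
      = (real CARD('n) * (z i \<bullet> z j) + 1) / (real CARD('n) + 1)"
    by (simp add: inner_commute add_divide_distrib)
  also have "\<dots> = (if i = j then 1 else 0)"
    using gram[OF \<open>i \<le> CARD('n)\<close> \<open>j \<le> CARD('n)\<close>] by simp
  finally show "(real CARD('n) / (real CARD('n) + 1)) *\<^sub>R z j \<bullet> z i + 1 / (real CARD('n) + 1)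
      = (if i = j then 1 else 0)" .
qed

lemma regular_simplex_admissible:
  fixes z :: "nat \<Rightarrow> real ^ 'n"
  assumes gram: "\<And>i j. i \<le> CARD('n) \<Longrightarrow> j \<le> CARD('n) \<Longrightarrow> z i \<bullet> z j = (if i = j then 1 else - 1 / CARD('n))"
  shows "admissible_simplex z"
proof -
  have "norm (z j) = 1" if "j \<le> CARD('n)" for j
    using gram[OF that that] by (simp add: norm_eq_sqrt_inner)
  then show ?thesis
    by (intro admissible_simplex_if_barycentric[OF regular_simplex_barycentric[OF gram]]) auto
qed

text \<open>The summands are the squared barycentric coordinates \<open>\<lambda>\<^sub>j\<close>; the identity follows from
  \<open>\<Sum>\<^sub>j \<lambda>\<^sub>j = 1\<close> and \<open>\<Sum>\<^sub>j \<lambda>\<^sub>j z\<^sub>j = y\<close>.\<close>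
lemma regular_simplex_sum_square_coords:
  fixes z :: "nat \<Rightarrow> real ^ 'n"
  assumes gram: "\<And>i j. i \<le> CARD('n) \<Longrightarrow> j \<le> CARD('n) \<Longrightarrow> z i \<bullet> z j = (if i = j then 1 else - 1 / CARD('n))"
  defines "n \<equiv> real CARD('n)"
  shows "(\<Sum>j\<le>CARD('n). ((1 + n * (y \<bullet> z j)) / (n + 1))\<^sup>2) = (1 + n * (y \<bullet> y)) / (n + 1)"
proof -
  define l where "l j = (1 + n * (y \<bullet> z j)) / (n + 1)" for j
  note adm = regular_simplex_admissible[OF gram] and bary = regular_simplex_barycentric[OF gram]
  have "n > 0"
    by (simp add: n_def)
  then have l: "(n / (n + 1)) *\<^sub>R z j \<bullet> y + 1 / (n + 1) = l j" for j
    by (simp add: l_def inner_commute add_divide_distrib)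
  have sum_l: "(\<Sum>j\<le>CARD('n). l j) = 1" and comb: "(\<Sum>j\<le>CARD('n). l j *\<^sub>R z j) = y"
    using sum_barycentric_eq_1[OF adm bary, of y] barycentric_combination_eq[OF adm bary, of y]
    by (simp_all only: l flip: n_def)
  have "(\<Sum>j\<le>CARD('n). l j * (y \<bullet> z j)) = y \<bullet> (\<Sum>j\<le>CARD('n). l j *\<^sub>R z j)"
    by (simp add: inner_sum_right)
  then have "(\<Sum>j\<le>CARD('n). l j * (y \<bullet> z j)) = y \<bullet> y"
    by (simp only: comb)
  moreover have "(l j)\<^sup>2 = (l j + n * (l j * (y \<bullet> z j))) / (n + 1)" for j
    using \<open>n > 0\<close> unfolding power2_eq_square by (subst (2) l_def) (simp add: field_simps)
  ultimately show ?thesis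
    using sum_l unfolding l_def[symmetric]
    by (simp add: sum_divide_distrib[symmetric] sum.distrib sum_distrib_left[symmetric])
qed

lemma regular_simplex_lebesgue_function_le:
  fixes z :: "nat \<Rightarrow> real ^ 'n"
  assumes gram: "\<And>i j. i \<le> CARD('n) \<Longrightarrow> j \<le> CARD('n) \<Longrightarrow> z i \<bullet> z j = (if i = j then 1 else - 1 / CARD('n))"
    and y: "y \<in> cball 0 1"
  shows "lebesgue_function (\<lambda>j. (real CARD('n) / (real CARD('n) + 1)) *\<^sub>R z j) (\<lambda>j. 1 / (real CARD('n) + 1)) y
           \<le> sqrt (real CARD('n) + 1)"
proof -
  define n where "n = real CARD('n)"
  define l where "l j = (1 + n * (y \<bullet> z j)) / (n + 1)" for j
  have "n > 0"
    by (simp add: n_def)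
  have "y \<bullet> y \<le> 1"
    using y by (simp add: power2_norm_eq_inner[symmetric] power_le_one)
  then have sum_sq: "(\<Sum>j\<le>CARD('n). (l j)\<^sup>2) \<le> 1"
    using regular_simplex_sum_square_coords[OF gram, of y] \<open>n > 0\<close> mult_left_le[of "y \<bullet> y" n]
    by (simp add: l_def n_def)
  have "(\<Sum>j\<le>CARD('n). \<bar>l j\<bar>)\<^sup>2 \<le> (\<Sum>j\<le>CARD('n). (l j)\<^sup>2) * (n + 1)"
    using sum_squared_le_sum_of_squares[of "\<lambda>j. \<bar>l j\<bar>" "{..CARD('n)}"] by (simp add: n_def add.commute)
  also have "\<dots> \<le> n + 1"
    using mult_right_mono[OF sum_sq, of "n + 1"] \<open>n > 0\<close> by simp
  finally have "(\<Sum>j\<le>CARD('n). \<bar>l j\<bar>)\<^sup>2 \<le> n + 1" .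
  moreover have "(real CARD('n) / (real CARD('n) + 1)) *\<^sub>R z j \<bullet> y + 1 / (real CARD('n) + 1) = l j" for j
    by (simp add: l_def n_def inner_commute add_divide_distrib)
  ultimately show ?thesis
    unfolding lebesgue_function_def by (simp add: n_def real_le_rsqrt)
qed

lemma proj_norm_nonneg:
  fixes x :: "nat \<Rightarrow> real ^ 'n"
  assumes "admissible_simplex x"
  shows "proj_norm x \<ge> 0"
proof -
  obtain a b where "barycentric_coordinates x a b"
    using barycentric_coordinates_exist[OF assms] .
  then show ?thesis
    using lebesgue_function_le_proj_norm[OF assms, of a b 0] lebesgue_function_nonneg[of a b 0]
    by simp
qed

lemma theta_le_sqrt: "theta TYPE('n::finite) \<le> sqrt (real CARD('n) + 1)"
proof -
  obtain z :: "nat \<Rightarrow> real ^ 'n"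
    where gram: "\<And>i j. i \<le> CARD('n) \<Longrightarrow> j \<le> CARD('n) \<Longrightarrow> z i \<bullet> z j = (if i = j then 1 else - 1 / CARD('n))"
    using regular_simplex_exists by blast
  note adm = regular_simplex_admissible[OF gram] and bary = regular_simplex_barycentric[OF gram]
  have "theta TYPE('n) \<le> proj_norm z"
    unfolding theta_def using adm proj_norm_nonneg
    by (intro cINF_lower bdd_belowI2[where m = 0]) auto
  also have "\<dots> \<le> sqrt (real CARD('n) + 1)"
    using regular_simplex_lebesgue_function_le[OF gram]
    by (intro proj_norm_le_lebesgue_function[OF adm bary]) auto
  finally show ?thesis .
qed

lemma measure_unit_cball: "measure lebesgue (cball (0 :: 'a::euclidean_space) 1) = unit_ball_vol DIM('a)"
  using content_cball[where c = "0::'a" and r = 1] by (simp add: measure_completion)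

theorem corollary3:
  fixes x :: "nat \<Rightarrow> real ^ 'n"
  assumes "admissible_simplex x"
    and "proj_norm x = theta TYPE('n)"
  shows "measure lebesgue (convex hull (x ` {..CARD('n)}))
           \<ge> measure lebesgue (cball (0 :: real ^ 'n) 1) / legendre CARD('n) (sqrt (real CARD('n) + 1))
    \<and> measure lebesgue (cball (0 :: real ^ 'n) 1) / legendre CARD('n) (sqrt (real CARD('n) + 1))
        = pi powr (real CARD('n) / 2) / (Gamma (real CARD('n) / 2 + 1) * legendre CARD('n) (sqrt (real CARD('n) + 1)))"
proof -
  let ?\<chi> = "legendre CARD('n) (sqrt (real CARD('n) + 1))"
  let ?S = "measure lebesgue (convex hull (x ` {..CARD('n)}))"
  have ball: "measure lebesgue (cball (0 :: real ^ 'n) 1) = unit_ball_vol CARD('n)"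
    using measure_unit_cball[where 'a = "real ^ 'n"] by simp
  have "unit_ball_vol CARD('n) \<le> ?\<chi> * ?S"
    using admissible_simplex_volume_bound[OF assms(1), of "sqrt (real CARD('n) + 1)"] assms(2) theta_le_sqrt
    by (simp add: ball)
  moreover have "unit_ball_vol CARD('n) > 0" "?S \<ge> 0"
    by simp_all
  ultimately have "?\<chi> > 0"
    by (smt (verit) mult_nonpos_nonneg)
  with \<open>unit_ball_vol CARD('n) \<le> ?\<chi> * ?S\<close> have "unit_ball_vol CARD('n) / ?\<chi> \<le> ?S"
    by (simp add: pos_divide_le_eq mult.commute)
  then show ?thesis
    by (simp add: ball unit_ball_vol_def)
qed

end
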